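(* Let $P$ be a prime differential algebra and let $Q\subseteq P$ be a differential subalgebra. Then $Q$ is prime.
   Context: All algebras are commutative associative algebras (not necessarily with unity) over a field $k$ of characteristic zero. A differential algebra is such an algebra equipped with a $k$-linear derivation $a\mapsto a'$ (satisfying the Leibniz rule). A differential subalgebra is a subalgebra closed under the derivation; a differential ideal is an ideal $I$ with $I'\subseteq I$. A differential algebra is called prime if for any two nonzero differential ideals $A,B$ one has $AB\neq 0$. *)

theory Defs
  imports Main
begin

text \<open>A (commutative, associative, not necessarily unital) algebra over a field
  of characteristic zero: the ring structure comes from the type class comm_ring,
  scalar multiplication by the field 'k is given explicitly.\<close>

definition k_algebra :: "('k::field_char_0 \<Rightarrow> 'a::comm_ring \<Rightarrow> 'a) \<Rightarrow> bool" where
  "k_algebra sc \<longleftrightarrow>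
     (\<forall>a b x. sc (a + b) x = sc a x + sc b x) \<and>
     (\<forall>a x y. sc a (x + y) = sc a x + sc a y) \<and>
     (\<forall>a b x. sc (a * b) x = sc a (sc b x)) \<and>
     (\<forall>x. sc 1 x = x) \<and>
     (\<forall>a x y. sc a (x * y) = sc a x * y)"

definition derivation :: "('k::field_char_0 \<Rightarrow> 'a::comm_ring \<Rightarrow> 'a) \<Rightarrow> ('a \<Rightarrow> 'a) \<Rightarrow> bool" where
  "derivation sc d \<longleftrightarrow>
     (\<forall>x y. d (x + y) = d x + d y) \<and>
     (\<forall>a x. d (sc a x) = sc a (d x)) \<and>
     (\<forall>x y. d (x * y) = d x * y + x * d y)"

definition subspace_k :: "('k::field_char_0 \<Rightarrow> 'a::comm_ring \<Rightarrow> 'a) \<Rightarrow> 'a set \<Rightarrow> bool" where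
  "subspace_k sc S \<longleftrightarrow> 0 \<in> S \<and> (\<forall>x\<in>S. \<forall>y\<in>S. x + y \<in> S) \<and> (\<forall>a. \<forall>x\<in>S. sc a x \<in> S)"

definition diff_subalgebra :: "('k::field_char_0 \<Rightarrow> 'a::comm_ring \<Rightarrow> 'a) \<Rightarrow> ('a \<Rightarrow> 'a) \<Rightarrow> 'a set \<Rightarrow> bool" where
  "diff_subalgebra sc d Q \<longleftrightarrow> subspace_k sc Q \<and> (\<forall>x\<in>Q. \<forall>y\<in>Q. x * y \<in> Q) \<and> (\<forall>x\<in>Q. d x \<in> Q)"

definition diff_ideal :: "('k::field_char_0 \<Rightarrow> 'a::comm_ring \<Rightarrow> 'a) \<Rightarrow> ('a \<Rightarrow> 'a) \<Rightarrow> 'a set \<Rightarrow> 'a set \<Rightarrow> bool" where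
  "diff_ideal sc d S I \<longleftrightarrow> I \<subseteq> S \<and> subspace_k sc I \<and> (\<forall>r\<in>S. \<forall>x\<in>I. r * x \<in> I) \<and> (\<forall>x\<in>I. d x \<in> I)"

definition ideal_prod :: "'a::comm_ring set \<Rightarrow> 'a set \<Rightarrow> 'a set" where
  "ideal_prod A B = {x. \<exists>(n::nat) (f::nat \<Rightarrow> 'a) (g::nat \<Rightarrow> 'a). (\<forall>i<n. f i \<in> A \<and> g i \<in> B) \<and> x = (\<Sum>i<n. f i * g i)}"

definition diff_prime :: "('k::field_char_0 \<Rightarrow> 'a::comm_ring \<Rightarrow> 'a) \<Rightarrow> ('a \<Rightarrow> 'a) \<Rightarrow> 'a set \<Rightarrow> bool" where
  "diff_prime sc d S \<longleftrightarrow>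
     (\<forall>A B. diff_ideal sc d S A \<and> diff_ideal sc d S B \<and> A \<noteq> {0} \<and> B \<noteq> {0}
        \<longrightarrow> ideal_prod A B \<noteq> {0})"

end

theory Submission
  imports Defs
begin

text \<open>If \<open>A B = 0\<close> for nonzero differential ideals \<open>A, B\<close> of \<open>Q\<close>, pass to the ambient
  algebra \<open>P\<close>: the annihilator of a derivation-stable set is a differential ideal of \<open>P\<close>,
  so \<open>Ann B \<supseteq> A\<close> and \<open>Ann (Ann B) \<supseteq> B\<close> are nonzero differential ideals of \<open>P\<close> whose
  product vanishes, contradicting primeness of \<open>P\<close>.\<close>

definition annihilator :: "'a::comm_ring set \<Rightarrow> 'a set" where
  "annihilator B = {x. \<forall>b\<in>B. x * b = 0}"

lemma k_algebra_scale_zero: "k_algebra sc \<Longrightarrow> sc a 0 = 0"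
proof -
  assume "k_algebra sc"
  then have "sc a (0 + 0) = sc a 0 + sc a 0" unfolding k_algebra_def by blast
  then show ?thesis by simp
qed

lemma derivation_zero: "derivation sc d \<Longrightarrow> d 0 = 0"
proof -
  assume "derivation sc d"
  then have "d (0 + 0) = d 0 + d 0" unfolding derivation_def by blast
  then show ?thesis by simp
qed

lemma ideal_prod_eq_zero_iff:
  "ideal_prod A B = {0} \<longleftrightarrow> (\<forall>a\<in>A. \<forall>b\<in>B. a * b = 0)"
proof
  assume zero: "ideal_prod A B = {0}"
  show "\<forall>a\<in>A. \<forall>b\<in>B. a * b = 0"
  proof (intro ballI)
    fix a b assume "a \<in> A" "b \<in> B"
    then have "(\<Sum>i<1::nat. (\<lambda>_. a) i * (\<lambda>_. b) i) \<in> ideal_prod A B"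
      unfolding ideal_prod_def mem_Collect_eq
      by (intro exI[of _ 1] exI[of _ "\<lambda>_. a"] exI[of _ "\<lambda>_. b"]) simp
    then show "a * b = 0" using zero by simp
  qed
next
  assume "\<forall>a\<in>A. \<forall>b\<in>B. a * b = 0"
  then have "ideal_prod A B \<subseteq> {0}" unfolding ideal_prod_def by auto
  moreover have "(\<Sum>i<0::nat. (\<lambda>_. 0) i * (\<lambda>_. 0) i) \<in> ideal_prod A B"
    unfolding ideal_prod_def mem_Collect_eq by (intro exI[of _ 0]) simp
  ultimately show "ideal_prod A B = {0}" by auto
qed

lemma diff_ideal_annihilator:
  assumes ka: "k_algebra sc" and dd: "derivation sc d" and stable: "\<forall>b\<in>B. d b \<in> B"
  shows "diff_ideal sc d UNIV (annihilator B)"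
  unfolding diff_ideal_def subspace_k_def
proof (intro conjI ballI allI)
  fix x y assume "x \<in> annihilator B" "y \<in> annihilator B"
  then show "x + y \<in> annihilator B" by (simp add: annihilator_def distrib_right)
next
  fix a x assume x: "x \<in> annihilator B"
  have "sc a x * b = sc a (x * b)" for b using ka unfolding k_algebra_def by simp
  with x show "sc a x \<in> annihilator B"
    by (simp add: annihilator_def k_algebra_scale_zero[OF ka])
next
  fix r x assume "x \<in> annihilator B"
  then show "r * x \<in> annihilator B" by (simp add: annihilator_def mult.assoc)
next
  fix x assume x: "x \<in> annihilator B"
  have "d x * b = 0" if b: "b \<in> B" for b
  proof -
    have "d (x * b) = d x * b + x * d b" using dd by (simp add: derivation_def)
    moreover have "x * b = 0" "x * d b = 0" using x b stable by (auto simp: annihilator_def)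
    ultimately show ?thesis by (simp add: derivation_zero[OF dd])
  qed
  then show "d x \<in> annihilator B" by (simp add: annihilator_def)
qed (auto simp: annihilator_def)

lemma diff_prime_annihilator_annihilator:
  assumes ka: "k_algebra sc" and dd: "derivation sc d"
    and prime: "diff_prime sc d (UNIV :: 'a::comm_ring set)"
    and stable: "\<forall>b\<in>B. d b \<in> B" and nonzero: "annihilator B \<noteq> {0}"
  shows "annihilator (annihilator B) = {0}"
proof -
  have ideal: "diff_ideal sc d UNIV (annihilator B)"
    using diff_ideal_annihilator[OF ka dd stable] .
  then have "\<forall>x\<in>annihilator B. d x \<in> annihilator B" by (simp add: diff_ideal_def)
  then have ideal': "diff_ideal sc d UNIV (annihilator (annihilator B))"
    using diff_ideal_annihilator[OF ka dd] by blast
  have "ideal_prod (annihilator B) (annihilator (annihilator B)) = {0}"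
    by (auto simp: ideal_prod_eq_zero_iff annihilator_def mult.commute)
  with prime ideal ideal' nonzero show ?thesis unfolding diff_prime_def by blast
qed

lemma diff_ideal_nonzero_elem:
  assumes "diff_ideal sc d S A" and "A \<noteq> {0}"
  obtains a where "a \<in> A" and "a \<noteq> 0"
  using assms by (auto simp: diff_ideal_def subspace_k_def)

theorem lemma2:
  fixes sc :: "'k::field_char_0 \<Rightarrow> 'a::comm_ring \<Rightarrow> 'a" and d :: "'a \<Rightarrow> 'a" and Q :: "'a set"
  assumes "k_algebra sc"
    and "derivation sc d"
    and "diff_prime sc d (UNIV :: 'a set)"
    and "diff_subalgebra sc d Q"
  shows "diff_prime sc d Q"
  unfolding diff_prime_def
proof (intro allI impI notI)
  fix A B :: "'a set"
  assume ideals: "diff_ideal sc d Q A \<and> diff_ideal sc d Q B \<and> A \<noteq> {0} \<and> B \<noteq> {0}"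
    and "ideal_prod A B = {0}"
  then have AB: "\<forall>a\<in>A. \<forall>b\<in>B. a * b = 0" by (simp add: ideal_prod_eq_zero_iff)
  obtain a where a: "a \<in> A" "a \<noteq> 0" using ideals diff_ideal_nonzero_elem by metis
  obtain b where b: "b \<in> B" "b \<noteq> 0" using ideals diff_ideal_nonzero_elem by metis
  have stable: "\<forall>b\<in>B. d b \<in> B" using ideals by (simp add: diff_ideal_def)
  have "a \<in> annihilator B" using AB a by (simp add: annihilator_def)
  with a have "annihilator B \<noteq> {0}" by blast
  then have "annihilator (annihilator B) = {0}"
    using diff_prime_annihilator_annihilator[OF assms(1-3) stable] by blast
  moreover have "b \<in> annihilator (annihilator B)"
    using b by (simp add: annihilator_def mult.commute)
  ultimately show False using b by blast
qed

end
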